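(* Let $G$ be a graph with $n$ vertices, $m$ edges, and maximum degree at most $\Delta$, where $\Delta$ is a positive integer. If $d\in\{0,1,\ldots,\Delta-1\}$ is such that $$\frac{2m}{n}\in\left[\frac{2\Delta d}{\Delta+d},\ \frac{2\Delta(d+1)}{\Delta+d+1}\right],$$ then $$irr(G)\leq d(d+1)n+\frac{1}{\Delta}\left(\Delta^2-(2d+1)\Delta-d^2-d\right)m.$$
   Context: All graphs are finite, simple and undirected. For a graph $G$ with edge set $E(G)$ and vertex degrees $d_G(u)$, the irregularity (in the sense of Albertson) is $irr(G)=\sum_{uv\in E(G)}|d_G(u)-d_G(v)|$. *)

theory Defs
  imports Complex_Main
begin

definition simple_graph :: "'a set \<Rightarrow> 'a set set \<Rightarrow> bool" where
  "simple_graph V E \<longleftrightarrow> finite V \<and> (\<forall>e\<in>E. e \<subseteq> V \<and> card e = 2)"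

definition degree :: "'a set set \<Rightarrow> 'a \<Rightarrow> nat" where
  "degree E v = card {e \<in> E. v \<in> e}"

definition irr :: "'a set set \<Rightarrow> int" where
  "irr E = (\<Sum>e\<in>E. \<bar>int (degree E (SOME u. u \<in> e)) - int (degree E (SOME v. v \<in> e - {SOME u. u \<in> e}))\<bar>)"

end

theory Submission
  imports Defs
begin

text \<open>For an edge with end degrees \<open>1 \<le> a \<le> b \<le> \<Delta>\<close> and \<open>D = d(d+1)\<close>, integrality gives
  \<open>a + D/a \<ge> 2d+1\<close> and monotonicity of \<open>x - D/x\<close> gives \<open>b - D/b \<le> \<Delta> - D/\<Delta>\<close>; adding,
  \<open>|a - b| \<le> D/a + D/b + c\<close> with \<open>c = \<Delta> - (2d+1) - D/\<Delta>\<close>. Summing over the edges, each vertex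
  \<open>v\<close> contributes \<open>D/deg v\<close> once per incident edge, i.e. \<open>D\<close> in total, so
  \<open>irr G \<le> D n + c m\<close>. The bound thus holds for every graph of maximum degree at most \<open>\<Delta>\<close>.\<close>

lemma add_pronic_div_ge:
  fixes a d :: nat
  assumes "1 \<le> a"
  shows "2 * real d + 1 \<le> real a + real d * (real d + 1) / real a"
proof -
  \<comment> \<open>no integer lies strictly between \<open>d\<close> and \<open>d + 1\<close>\<close>
  have "0 \<le> (real a - d) * (real a - d - 1)"
    by (cases "a \<le> d") (auto intro: mult_nonpos_nonpos)
  then have "(2 * real d + 1) * real a \<le> real a * real a + real d * (real d + 1)"
    by (simp add: algebra_simps)
  with assms show ?thesis by (simp add: field_simps)
qed

lemma diff_div_mono:
  fixes x y D :: real
  assumes "0 < x" "x \<le> y" "0 \<le> D"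
  shows "x - D / x \<le> y - D / y"
proof -
  have "D / y \<le> D / x" using assms by (intro divide_left_mono) auto
  with assms show ?thesis by simp
qed

lemma abs_diff_le_pronic_bound:
  fixes a b \<Delta> d :: nat
  assumes "1 \<le> a" "a \<le> \<Delta>" "1 \<le> b" "b \<le> \<Delta>"
  shows "\<bar>real a - real b\<bar> \<le> real d * (real d + 1) / real a + real d * (real d + 1) / real b
     + (1 / real \<Delta>) * ((real \<Delta>)^2 - (2 * real d + 1) * real \<Delta> - (real d)^2 - real d)"
proof -
  have c: "(1 / real \<Delta>) * ((real \<Delta>)^2 - (2 * real d + 1) * real \<Delta> - (real d)^2 - real d)
     = real \<Delta> - (2 * real d + 1) - real d * (real d + 1) / real \<Delta>"
    using assms by (simp add: field_simps power2_eq_square)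
  have "\<bar>real a - real b\<bar> \<le> real d * (real d + 1) / real a + real d * (real d + 1) / real b
     + (real \<Delta> - (2 * real d + 1) - real d * (real d + 1) / real \<Delta>)"
  proof (cases "a \<le> b")
    case True
    then show ?thesis
      using add_pronic_div_ge[OF assms(1), of d]
        diff_div_mono[of "real b" "real \<Delta>" "real d * (real d + 1)"] assms by simp
  next
    case False
    then show ?thesis
      using add_pronic_div_ge[OF assms(3), of d]
        diff_div_mono[of "real a" "real \<Delta>" "real d * (real d + 1)"] assms by simp
  qed
  then show ?thesis unfolding c .
qed

lemma simple_graph_finite_edges:
  assumes "simple_graph V E"
  shows "finite E"
proof -
  have "E \<subseteq> Pow V" using assms by (auto simp: simple_graph_def)
  with assms show ?thesis by (auto simp: simple_graph_def intro: finite_subset)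
qed

lemma degree_pos_if_incident:
  assumes "finite E" "e \<in> E" "x \<in> e"
  shows "1 \<le> degree E x"
proof -
  have "{e \<in> E. x \<in> e} \<noteq> {}" using assms by auto
  with assms(1) show ?thesis by (simp add: degree_def Suc_le_eq card_gt_0_iff)
qed

lemma irr_edge_term_eq:
  assumes "card e = 2"
  obtains s t where "e = {s, t}" "s \<noteq> t"
    and "\<bar>int (degree E (SOME u. u \<in> e)) - int (degree E (SOME v. v \<in> e - {SOME u. u \<in> e}))\<bar>
         = \<bar>int (degree E s) - int (degree E t)\<bar>"
proof -
  define s where "s = (SOME u. u \<in> e)"
  define t where "t = (SOME v. v \<in> e - {s})"
  obtain u w where uw: "e = {u, w}" "u \<noteq> w" using assms by (meson card_2_iff)
  have s: "s \<in> e" unfolding s_def using uw by (metis insertI1 someI_ex)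
  then have "e - {s} \<noteq> {}" using uw by auto
  then have t: "t \<in> e - {s}" unfolding t_def by (metis ex_in_conv someI_ex)
  have "e = {s, t}" "s \<noteq> t" using uw s t by auto
  then show ?thesis by (rule that) (simp add: s_def t_def)
qed

lemma sum_edges_sum_ends:
  assumes "simple_graph V E"
  shows "(\<Sum>e\<in>E. \<Sum>x\<in>e. f x) = (\<Sum>x\<in>V. real (degree E x) * f x)"
proof -
  have fin: "finite V" "finite E"
    using assms simple_graph_finite_edges by (auto simp: simple_graph_def)
  have "(\<Sum>e\<in>E. \<Sum>x\<in>e. f x) = (\<Sum>e\<in>E. \<Sum>x\<in>V. if x \<in> e then f x else 0)"
  proof (rule sum.cong[OF refl])
    fix e assume "e \<in> E"
    then have "V \<inter> e = e" using assms by (auto simp: simple_graph_def)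
    then show "(\<Sum>x\<in>e. f x) = (\<Sum>x\<in>V. if x \<in> e then f x else 0)"
      using fin by (simp add: sum.inter_restrict[symmetric])
  qed
  also have "\<dots> = (\<Sum>x\<in>V. \<Sum>e\<in>E. if x \<in> e then f x else 0)"
    by (rule sum.swap)
  also have "\<dots> = (\<Sum>x\<in>V. real (degree E x) * f x)"
    using fin by (simp add: sum.inter_filter[symmetric] degree_def)
  finally show ?thesis .
qed

lemma irr_edge_term_le:
  assumes "simple_graph V E" "\<forall>v\<in>V. degree E v \<le> \<Delta>" "e \<in> E"
  shows "real_of_int \<bar>int (degree E (SOME u. u \<in> e)) - int (degree E (SOME v. v \<in> e - {SOME u. u \<in> e}))\<bar>
    \<le> (\<Sum>x\<in>e. real d * (real d + 1) / real (degree E x))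
      + (1 / real \<Delta>) * ((real \<Delta>)^2 - (2 * real d + 1) * real \<Delta> - (real d)^2 - real d)"
proof -
  have e: "e \<subseteq> V" "card e = 2" using assms by (auto simp: simple_graph_def)
  obtain s t where st: "e = {s, t}" "s \<noteq> t"
    and eq: "\<bar>int (degree E (SOME u. u \<in> e)) - int (degree E (SOME v. v \<in> e - {SOME u. u \<in> e}))\<bar>
               = \<bar>int (degree E s) - int (degree E t)\<bar>"
    using irr_edge_term_eq[OF e(2)] .
  have "1 \<le> degree E s" "1 \<le> degree E t"
    using degree_pos_if_incident[OF simple_graph_finite_edges[OF assms(1)] assms(3)] st by auto
  moreover have "degree E s \<le> \<Delta>" "degree E t \<le> \<Delta>" using assms(2) e st by auto
  ultimately show ?thesis
    using abs_diff_le_pronic_bound[of "degree E s" \<Delta> "degree E t" d] st eq by simp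
qed

theorem theorem1:
  fixes V :: "'a set" and E :: "'a set set" and \<Delta> d :: nat
  assumes "simple_graph V E"
    and "\<Delta> > 0"
    and "\<forall>v\<in>V. degree E v \<le> \<Delta>"
    and "d < \<Delta>"
    and "2 * real \<Delta> * real d / (real \<Delta> + real d) \<le> 2 * real (card E) / real (card V)"
    and "2 * real (card E) / real (card V) \<le> 2 * real \<Delta> * (real d + 1) / (real \<Delta> + real d + 1)"
  shows "real_of_int (irr E) \<le> real d * (real d + 1) * real (card V)
           + (1 / real \<Delta>) * ((real \<Delta>)^2 - (2 * real d + 1) * real \<Delta> - (real d)^2 - real d) * real (card E)"
proof -
  define D where "D = real d * (real d + 1)"
  define c where "c = (1 / real \<Delta>) * ((real \<Delta>)^2 - (2 * real d + 1) * real \<Delta> - (real d)^2 - real d)"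
  have "real_of_int (irr E) \<le> (\<Sum>e\<in>E. (\<Sum>x\<in>e. D / real (degree E x)) + c)"
    unfolding irr_def of_int_sum D_def c_def
    by (rule sum_mono) (rule irr_edge_term_le[OF assms(1,3)])
  also have "\<dots> = (\<Sum>x\<in>V. real (degree E x) * (D / real (degree E x))) + c * real (card E)"
    by (simp add: sum.distrib sum_edges_sum_ends[OF assms(1)])
  also have "\<dots> \<le> (\<Sum>x\<in>V. D) + c * real (card E)"
    by (intro add_right_mono sum_mono) (simp add: D_def)
  also have "\<dots> = D * real (card V) + c * real (card E)"
    by simp
  finally show ?thesis unfolding D_def c_def by simp
qed

end
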